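(* Let $f:M^2\to\mathbb{R}^3$ be a surface in curvature line coordinates $(x,y)$ with metric $H_1^2dx^2+H_2^2dy^2$ and nonvanishing principal curvatures $\kappa_1,\kappa_2$, let $\varepsilon\in\{0,\pm1\}$, and let $\hat f$ be an associated surface given by $d\hat f=h\,\partial_xf\,dx+l\,\partial_yf\,dy$ with $(h-l)^2=\frac{1}{H_1^2}+\frac{\varepsilon}{H_2^2}$. Let $f^\star$ be the corresponding dual surface, $df^\star=\big(-h^2+\frac1{H_1^2}\big)\partial_xf\,dx+\big(-l^2+\frac{\varepsilon}{H_2^2}\big)\partial_yf\,dy$. Then, with principal curvatures of $\hat f,f^\star$ taken with respect to the normal of $f$, i.e. $\frac1{\hat\kappa_1}=\frac h{\kappa_1}$, $\frac1{\hat\kappa_2}=\frac l{\kappa_2}$, $\frac1{\kappa_1^\star}=\frac{-h^2+1/H_1^2}{\kappa_1}$, $\frac1{\kappa_2^\star}=\frac{-l^2+\varepsilon/H_2^2}{\kappa_2}$, $$\Big(\frac1{\kappa_1}-\frac1{\kappa_2}\Big)\Big(\frac1{\kappa_1^\star}-\frac1{\kappa_2^\star}\Big)=\frac{1}{\kappa_1^2H_1^2}+\frac{\varepsilon}{\kappa_2^2H_2^2}-\Big(\frac1{\hat\kappa_1}-\frac1{\hat\kappa_2}\Big)^2 .$$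
   Context: Surfaces are parametrized by curvature line coordinates (orthogonal, conjugate); $\kappa_1,\kappa_2$ are the principal curvatures along $x$- and $y$-lines. A Combescure transform $\hat f$ of $f$ is a surface with $d\hat f=h\,\partial_xf\,dx+l\,\partial_yf\,dy$; its principal curvatures in the corresponding directions are $\kappa_1/h$ and $\kappa_2/l$ (up to the common sign given by normal orientation). $f$ is a G-surface with associated surface $\hat f$ if $cH_1^2H_2^2(\kappa_1/\hat\kappa_1-\kappa_2/\hat\kappa_2)^2=H_2^2+\varepsilon H_1^2$ for some $c\ne0$, $\varepsilon\in\{0,\pm1\}$; the hypothesis $(h-l)^2=1/H_1^2+\varepsilon/H_2^2$ is this condition with $c=1$. The 1-form defining $f^\star$ is closed under this hypothesis. *)

theory Defs
  imports "HOL-Analysis.Analysis"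
begin

definition partials_on ::
  "(real \<times> real) set \<Rightarrow> (real \<times> real \<Rightarrow> real^3) \<Rightarrow>
   (real \<times> real \<Rightarrow> real^3) \<Rightarrow> (real \<times> real \<Rightarrow> real^3) \<Rightarrow> bool" where
  "partials_on U g gx gy \<longleftrightarrow>
     (\<forall>p\<in>U. (g has_derivative (\<lambda>(u,v). u *\<^sub>R gx p + v *\<^sub>R gy p)) (at p))"

text \<open>Curvature line coordinates with metric H1^2 dx^2 + H2^2 dy^2, unit normal n
  and principal curvatures k1, k2 (Rodrigues: n_x = -k1 f_x, n_y = -k2 f_y).\<close>
definition curvature_line_surface ::
  "(real \<times> real) set \<Rightarrow> (real \<times> real \<Rightarrow> real^3) \<Rightarrow>
   (real \<times> real \<Rightarrow> real^3) \<Rightarrow> (real \<times> real \<Rightarrow> real^3) \<Rightarrow>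
   (real \<times> real \<Rightarrow> real^3) \<Rightarrow>
   (real \<times> real \<Rightarrow> real) \<Rightarrow> (real \<times> real \<Rightarrow> real) \<Rightarrow>
   (real \<times> real \<Rightarrow> real) \<Rightarrow> (real \<times> real \<Rightarrow> real) \<Rightarrow> bool" where
  "curvature_line_surface U f fx fy n H1 H2 k1 k2 \<longleftrightarrow>
     open U \<and> partials_on U f fx fy \<and>
     partials_on U n (\<lambda>p. - k1 p *\<^sub>R fx p) (\<lambda>p. - k2 p *\<^sub>R fy p) \<and>
     (\<forall>p\<in>U. H1 p \<noteq> 0 \<and> H2 p \<noteq> 0 \<and>
        fx p \<bullet> fx p = (H1 p)\<^sup>2 \<and> fy p \<bullet> fy p = (H2 p)\<^sup>2 \<and> fx p \<bullet> fy p = 0 \<and>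
        norm (n p) = 1 \<and> n p \<bullet> fx p = 0 \<and> n p \<bullet> fy p = 0)"

definition combescure_transform ::
  "(real \<times> real) set \<Rightarrow> (real \<times> real \<Rightarrow> real^3) \<Rightarrow> (real \<times> real \<Rightarrow> real^3) \<Rightarrow>
   (real \<times> real \<Rightarrow> real) \<Rightarrow> (real \<times> real \<Rightarrow> real) \<Rightarrow>
   (real \<times> real \<Rightarrow> real^3) \<Rightarrow> bool" where
  "combescure_transform U fx fy a b g \<longleftrightarrow>
     partials_on U g (\<lambda>p. a p *\<^sub>R fx p) (\<lambda>p. b p *\<^sub>R fy p)"

end

theory Submission
  imports Defs
begin

text \<open>The statement is pointwise algebra. With
  a = 1/k1, b = 1/k2 the left-hand side differs from the right-hand side by
  a b ((h - l)^2 - 1/H1^2 - \<epsilon>/H2^2), which vanishes by the associated-surface condition.\<close>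

lemma dual_curvature_product_expansion:
  fixes a b h l A B :: "'a :: comm_ring_1"
  shows "(a - b) * (a * (A - h\<^sup>2) - b * (B - l\<^sup>2))
           = a\<^sup>2 * A + b\<^sup>2 * B - (a * h - b * l)\<^sup>2 + a * b * ((h - l)\<^sup>2 - A - B)"
  by (simp add: algebra_simps power2_eq_square)

lemma dual_curvature_product_identity:
  fixes a b h l A B :: "'a :: comm_ring_1"
  assumes "(h - l)\<^sup>2 = A + B"
  shows "(a - b) * (a * (A - h\<^sup>2) - b * (B - l\<^sup>2)) = a\<^sup>2 * A + b\<^sup>2 * B - (a * h - b * l)\<^sup>2"
  using dual_curvature_product_expansion[of a b A h B l] assms by simp

theorem lemma3p8:
  fixes U :: "(real \<times> real) set"
    and f fx fy n fhat fstar :: "real \<times> real \<Rightarrow> real^3"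
    and H1 H2 k1 k2 h l :: "real \<times> real \<Rightarrow> real"
    and \<epsilon> :: real
  assumes surf: "curvature_line_surface U f fx fy n H1 H2 k1 k2"
    and k_nz: "\<forall>p\<in>U. k1 p \<noteq> 0 \<and> k2 p \<noteq> 0"
    and eps: "\<epsilon> \<in> {-1, 0, 1}"
    and assoc: "combescure_transform U fx fy h l fhat"
    and hyp: "\<forall>p\<in>U. (h p - l p)\<^sup>2 = 1 / (H1 p)\<^sup>2 + \<epsilon> / (H2 p)\<^sup>2"
    and dual: "combescure_transform U fx fy
                 (\<lambda>p. - (h p)\<^sup>2 + 1 / (H1 p)\<^sup>2) (\<lambda>p. - (l p)\<^sup>2 + \<epsilon> / (H2 p)\<^sup>2) fstar"
    and p: "p \<in> U"
  shows "(1 / k1 p - 1 / k2 p) *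
           ((- (h p)\<^sup>2 + 1 / (H1 p)\<^sup>2) / k1 p - (- (l p)\<^sup>2 + \<epsilon> / (H2 p)\<^sup>2) / k2 p)
         = 1 / ((k1 p)\<^sup>2 * (H1 p)\<^sup>2) + \<epsilon> / ((k2 p)\<^sup>2 * (H2 p)\<^sup>2)
           - (h p / k1 p - l p / k2 p)\<^sup>2"
proof -
  define a b A B where "a = 1 / k1 p" and "b = 1 / k2 p"
    and "A = 1 / (H1 p)\<^sup>2" and "B = \<epsilon> / (H2 p)\<^sup>2"
  have "(h p - l p)\<^sup>2 = A + B"
    using hyp p by (simp add: A_def B_def)
  then have "(a - b) * (a * (A - (h p)\<^sup>2) - b * (B - (l p)\<^sup>2))
               = a\<^sup>2 * A + b\<^sup>2 * B - (a * h p - b * l p)\<^sup>2"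
    by (rule dual_curvature_product_identity)
  then show ?thesis
    by (simp add: a_def b_def A_def B_def divide_inverse algebra_simps power2_eq_square)
qed

end
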